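(* For a thermodynamic Stephani universe, the fluid velocity $u$ satisfies $\sigma=0$ and $d\!\left[\mathbf a-\frac13\theta u\right]=0$ (i.e. the comoving observer can measure isotropic radiation) if and only if $b''(R)=0$, i.e. $b(R)=b_1+b_2R$ with constants $b_1,b_2$. In that case the function $\beta=R\alpha$ satisfies $d\ln\beta=\mathbf a-\frac13\theta u$, and the test radiation fluid has $\rho_r=3p_r=a_R\Theta_r^4$ with $\Theta_r=\Theta_0\frac{R_0}{R}\left[1+\frac{b_2wR}{1+b_1w}\right]$.
   Context: Thermodynamic Stephani universe: $ds^2=-\alpha^2dt^2+\Omega^2(dx^2+dy^2+dz^2)$ with $L=R(t)/(1+b(t)w)$, $\Omega=\frac{w}{2z}L$, $\alpha=R\,\partial_R\ln L=\frac{1+(b-Rb')w}{1+bw}$, $w=2z/(1+\frac\varepsilon4 r^2)$, $r^2=x^2+y^2+z^2$, $\varepsilon\in\{0,\pm1\}$; functions of $t$ regarded as functions of $R$ (prime $=d/dR$, $\dot R\neq0$). $u=\alpha^{-1}\partial_t$ (as a 1-form $u=-\alpha\,dt$), $\sigma$ its shear, $\mathbf a$ its acceleration, $\theta=3\dot R/R$ its expansion; $a_R,\Theta_0,R_0$ are constants. *)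

theory Defs
  imports "HOL-Analysis.Analysis"
begin

text \<open>Spacetime points: coordinates (t,x,y,z) = (p$0, p$1, p$2, p$3).\<close>
type_synonym pt = "real^4"

definition pd :: "4 \<Rightarrow> (pt \<Rightarrow> real) \<Rightarrow> pt \<Rightarrow> real" where
  "pd i f p = deriv (\<lambda>s. f (\<chi> j. if j = i then s else p $ j)) (p $ i)"

definition christoffel ::
  "(pt \<Rightarrow> 4 \<Rightarrow> 4 \<Rightarrow> real) \<Rightarrow> (pt \<Rightarrow> 4 \<Rightarrow> 4 \<Rightarrow> real) \<Rightarrow> pt \<Rightarrow> 4 \<Rightarrow> 4 \<Rightarrow> 4 \<Rightarrow> real" where
  "christoffel g gi p l m n = (1/2) * (\<Sum>k\<in>UNIV. gi p l k *
      (pd m (\<lambda>q. g q k n) p + pd n (\<lambda>q. g q k m) p - pd k (\<lambda>q. g q m n) p))"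

definition cov_covec ::
  "(pt \<Rightarrow> 4 \<Rightarrow> 4 \<Rightarrow> real) \<Rightarrow> (pt \<Rightarrow> 4 \<Rightarrow> 4 \<Rightarrow> real) \<Rightarrow> (pt \<Rightarrow> 4 \<Rightarrow> real) \<Rightarrow> pt \<Rightarrow> 4 \<Rightarrow> 4 \<Rightarrow> real" where
  "cov_covec g gi w p m n = pd m (\<lambda>q. w q n) p - (\<Sum>l\<in>UNIV. christoffel g gi p l m n * w p l)"

definition lower :: "(pt \<Rightarrow> 4 \<Rightarrow> 4 \<Rightarrow> real) \<Rightarrow> (pt \<Rightarrow> 4 \<Rightarrow> real) \<Rightarrow> pt \<Rightarrow> 4 \<Rightarrow> real" where
  "lower g v p n = (\<Sum>m\<in>UNIV. g p n m * v p m)"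

definition accel where
  "accel g gi u p n = (\<Sum>m\<in>UNIV. u p m * cov_covec g gi (lower g u) p m n)"

definition expansion where
  "expansion g gi u p = (\<Sum>m\<in>UNIV. \<Sum>n\<in>UNIV. gi p m n * cov_covec g gi (lower g u) p m n)"

definition shear where
  "shear g gi u p m n =
     (cov_covec g gi (lower g u) p m n + cov_covec g gi (lower g u) p n m) / 2
     + (accel g gi u p m * lower g u p n + accel g gi u p n * lower g u p m) / 2
     - expansion g gi u p / 3 * (g p m n + lower g u p m * lower g u p n)"

definition closed_on :: "pt set \<Rightarrow> (pt \<Rightarrow> 4 \<Rightarrow> real) \<Rightarrow> bool" where
  "closed_on U w \<longleftrightarrow> (\<forall>p\<in>U. \<forall>m n. pd m (\<lambda>q. w q n) p = pd n (\<lambda>q. w q m) p)"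

definition div2 where
  "div2 g gi T p n = (\<Sum>m\<in>UNIV. pd m (\<lambda>q. T q m n) p
      + (\<Sum>l\<in>UNIV. christoffel g gi p m m l * T p l n)
      + (\<Sum>l\<in>UNIV. christoffel g gi p n m l * T p m l))"

definition rsq :: "pt \<Rightarrow> real" where
  "rsq p = (p$1)^2 + (p$2)^2 + (p$3)^2"

definition st_w :: "real \<Rightarrow> pt \<Rightarrow> real" where
  "st_w \<epsilon> p = 2 * p$3 / (1 + \<epsilon> / 4 * rsq p)"

definition st_L :: "(real \<Rightarrow> real) \<Rightarrow> (real \<Rightarrow> real) \<Rightarrow> real \<Rightarrow> pt \<Rightarrow> real" where
  "st_L R B \<epsilon> p = R (p$0) / (1 + B (R (p$0)) * st_w \<epsilon> p)"

text \<open>Omega = w/(2z) L, written as L/(1 + eps r^2/4) (same for z /= 0, continuous at z = 0).\<close>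
definition st_Omega :: "(real \<Rightarrow> real) \<Rightarrow> (real \<Rightarrow> real) \<Rightarrow> real \<Rightarrow> pt \<Rightarrow> real" where
  "st_Omega R B \<epsilon> p = st_L R B \<epsilon> p / (1 + \<epsilon> / 4 * rsq p)"

definition st_alpha :: "(real \<Rightarrow> real) \<Rightarrow> (real \<Rightarrow> real) \<Rightarrow> real \<Rightarrow> pt \<Rightarrow> real" where
  "st_alpha R B \<epsilon> p =
     (1 + (B (R (p$0)) - R (p$0) * deriv B (R (p$0))) * st_w \<epsilon> p) / (1 + B (R (p$0)) * st_w \<epsilon> p)"

definition st_g :: "(real \<Rightarrow> real) \<Rightarrow> (real \<Rightarrow> real) \<Rightarrow> real \<Rightarrow> pt \<Rightarrow> 4 \<Rightarrow> 4 \<Rightarrow> real" where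
  "st_g R B \<epsilon> p i j = (if i \<noteq> j then 0 else if i = 0 then - ((st_alpha R B \<epsilon> p)^2)
                        else (st_Omega R B \<epsilon> p)^2)"

definition st_gi :: "(real \<Rightarrow> real) \<Rightarrow> (real \<Rightarrow> real) \<Rightarrow> real \<Rightarrow> pt \<Rightarrow> 4 \<Rightarrow> 4 \<Rightarrow> real" where
  "st_gi R B \<epsilon> p i j = (if i \<noteq> j then 0 else if i = 0 then - (1 / (st_alpha R B \<epsilon> p)^2)
                        else 1 / (st_Omega R B \<epsilon> p)^2)"

definition st_u :: "(real \<Rightarrow> real) \<Rightarrow> (real \<Rightarrow> real) \<Rightarrow> real \<Rightarrow> pt \<Rightarrow> 4 \<Rightarrow> real" where
  "st_u R B \<epsilon> p i = (if i = 0 then 1 / st_alpha R B \<epsilon> p else 0)"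

definition st_shear where
  "st_shear R B \<epsilon> = shear (st_g R B \<epsilon>) (st_gi R B \<epsilon>) (st_u R B \<epsilon>)"

definition st_omega :: "(real \<Rightarrow> real) \<Rightarrow> (real \<Rightarrow> real) \<Rightarrow> real \<Rightarrow> pt \<Rightarrow> 4 \<Rightarrow> real" where
  "st_omega R B \<epsilon> p n =
     accel (st_g R B \<epsilon>) (st_gi R B \<epsilon>) (st_u R B \<epsilon>) p n
     - expansion (st_g R B \<epsilon>) (st_gi R B \<epsilon>) (st_u R B \<epsilon>) p / 3
       * lower (st_g R B \<epsilon>) (st_u R B \<epsilon>) p n"

definition st_fluidT where
  "st_fluidT R B \<epsilon> rho P q i j =
     (rho q + P q) * st_u R B \<epsilon> q i * st_u R B \<epsilon> q j + P q * st_gi R B \<epsilon> q i j"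

end

theory Submission
  imports Defs
begin

text \<open>
  The metric is diagonal, \<open>-\<alpha>\<^sup>2 dt\<^sup>2 + \<Omega>\<^sup>2 (dx\<^sup>2 + dy\<^sup>2 + dz\<^sup>2)\<close>, so for the comoving observer
  \<open>u = \<alpha>\<^sup>-\<^sup>1 \<partial>\<^sub>t\<close> the Christoffel symbols give \<open>\<sigma> = 0\<close> and
  \<open>\<omega> = a - \<theta>/3 u = (\<partial>\<^sub>t ln \<Omega>) dt + \<partial>\<^sub>i ln \<alpha> dx\<^sup>i\<close>, for any lapse \<open>\<alpha>\<close> and conformal factor \<open>\<Omega>\<close>.
  For Stephani, \<open>\<partial>\<^sub>t ln \<Omega> = R' \<alpha> / R\<close> because \<open>\<alpha> = R \<partial>\<^sub>R ln L\<close>, and \<open>\<alpha>\<close> depends on space only through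
  \<open>w\<close>, so \<open>\<omega>\<^sub>i = \<psi> \<partial>\<^sub>i w\<close>. The space-space components of \<open>d\<omega>\<close> vanish by symmetry of the Hessian of
  \<open>w\<close>, while the mixed ones are \<open>-R' R b'' \<partial>\<^sub>i w / (1 + (b - R b') w)\<^sup>2\<close>; since \<open>\<partial>\<^sub>i w\<close> cannot vanish
  on a whole slice of an open set, \<open>\<omega>\<close> is closed iff \<open>b'' = 0\<close>. In that case the same computation
  gives \<open>d ln \<beta> = \<omega>\<close> with \<open>\<beta> = R \<alpha>\<close>, and for linear \<open>b\<close> the given temperature is \<open>\<Theta>\<^sub>0 R\<^sub>0 / \<beta>\<close>;
  in a diagonal metric a radiation fluid whose temperature satisfies \<open>d ln \<Theta> = -\<omega>\<close> is conserved.
\<close>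

section \<open>Partial derivatives via gradients\<close>

lemma four_eq_zero: "(4::4) = 0"
  by simp

lemma sum_UNIV_4: "sum f (UNIV::4 set) = f 0 + f 1 + f 2 + f 3"
  by (simp add: sum_4 four_eq_zero algebra_simps)

lemma UNIV_4_cases: "(x::4) = 0 \<or> x = 1 \<or> x = 2 \<or> x = 3"
  using exhaust_4[of x] four_eq_zero by metis

lemma sum_UNIV_single:
  fixes f :: "'a::finite \<Rightarrow> 'b::comm_monoid_add"
  assumes "\<And>k. k \<noteq> l \<Longrightarrow> f k = 0"
  shows "(\<Sum>k\<in>UNIV. f k) = f l"
proof -
  have "(\<Sum>k\<in>UNIV. f k) = f l + (\<Sum>k\<in>UNIV - {l}. f k)"
    by (rule sum.remove) simp_all
  also have "(\<Sum>k\<in>UNIV - {l}. f k) = 0"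
    by (rule sum.neutral) (simp add: assms)
  finally show ?thesis by simp
qed

definition has_gradient :: "(pt \<Rightarrow> real) \<Rightarrow> (4 \<Rightarrow> real) \<Rightarrow> pt \<Rightarrow> bool" where
  "has_gradient f G p \<longleftrightarrow> (f has_derivative (\<lambda>h. \<Sum>k\<in>UNIV. G k * h$k)) (at p)"

lemma has_gradient_cong: "has_gradient f G p \<Longrightarrow> (\<And>k. G k = H k) \<Longrightarrow> has_gradient f H p"
  by (simp add: has_gradient_def)

lemma pd_has_gradient:
  assumes "has_gradient f G p"
  shows "pd i f p = G i"
proof -
  define line where "line s = (\<chi> j. if j = i then s else p $ j)" for s
  have line_eq: "line = (\<lambda>s. p + (s - p$i) *\<^sub>R axis i 1)"
    by (simp add: line_def vec_eq_iff axis_def fun_eq_iff)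
  have line: "(line has_derivative (\<lambda>h. h *\<^sub>R axis i 1)) (at (p$i))"
    unfolding line_eq by (auto intro!: derivative_eq_intros)
  have "line (p$i) = p" by (simp add: line_def vec_eq_iff)
  then have "(f has_derivative (\<lambda>h. \<Sum>k\<in>UNIV. G k * h$k)) (at (line (p$i)))"
    using assms by (simp add: has_gradient_def)
  from has_derivative_compose[OF line this]
  have "((\<lambda>s. f (line s)) has_derivative (\<lambda>h. \<Sum>k\<in>UNIV. G k * (h *\<^sub>R axis i 1)$k)) (at (p$i))"
    by simp
  moreover have "(\<lambda>h. \<Sum>k\<in>UNIV. G k * (h *\<^sub>R axis i (1::real))$k) = (\<lambda>h. G i * h)"
    by (auto simp: axis_def if_distrib cong: if_cong)
  ultimately have "((\<lambda>s. f (line s)) has_real_derivative G i) (at (p$i))"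
    by (simp add: has_field_derivative_def)
  then show ?thesis unfolding pd_def line_def by (rule DERIV_imp_deriv)
qed

lemma pd_cong_open:
  assumes "open U" "p \<in> U" "\<And>q. q \<in> U \<Longrightarrow> f q = g q"
  shows "pd i f p = pd i g p"
proof -
  let ?line = "\<lambda>s. (\<chi> j. if j = i then s else p $ j) :: pt"
  have line_eq: "?line = (\<lambda>s. p + (s - p$i) *\<^sub>R axis i 1)"
    by (simp add: vec_eq_iff axis_def fun_eq_iff)
  have "continuous_on UNIV ?line"
    unfolding line_eq by (intro continuous_intros)
  then have open_preimage: "open (?line -` U)" using open_vimage[OF assms(1)] by blast
  have "?line (p$i) = p" by (simp add: vec_eq_iff)
  then have "p$i \<in> ?line -` U" using assms(2) by simp
  then have "eventually (\<lambda>s. ?line s \<in> U) (nhds (p$i))"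
    using open_preimage eventually_nhds by blast
  then have "eventually (\<lambda>s. f (?line s) = g (?line s)) (nhds (p$i))"
    by (rule eventually_mono) (simp add: assms(3))
  then show ?thesis unfolding pd_def by (rule deriv_cong_ev) simp
qed

lemma has_gradient_transform_open:
  assumes "has_gradient f G p" "open U" "p \<in> U" "\<And>q. q \<in> U \<Longrightarrow> f q = g q"
  shows "has_gradient g G p"
  using assms(1)[unfolded has_gradient_def] assms(2-4) unfolding has_gradient_def
  by (rule has_derivative_transform_within_open)

lemma has_gradient_const: "has_gradient (\<lambda>q. c) (\<lambda>k. 0) p"
  by (simp add: has_gradient_def)

lemma pd_const: "pd i (\<lambda>q. c) p = 0"
  by (rule pd_has_gradient[OF has_gradient_const])

lemma has_gradient_coord: "has_gradient (\<lambda>q. q$j) (\<lambda>k. if k = j then 1 else 0) p"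
proof -
  have "(\<Sum>k\<in>UNIV. (if k = j then 1 else 0) * h$k) = h$j" for h :: pt
    by (subst sum_UNIV_single[where l=j]) simp_all
  moreover have "((\<lambda>q. q$j) has_derivative (\<lambda>h. h$j)) (at p)"
    by (rule bounded_linear_imp_has_derivative[OF bounded_linear_vec_nth])
  ultimately show ?thesis
    unfolding has_gradient_def by simp
qed

lemma has_gradient_add:
  "has_gradient f F p \<Longrightarrow> has_gradient g G p \<Longrightarrow> has_gradient (\<lambda>q. f q + g q) (\<lambda>k. F k + G k) p"
  unfolding has_gradient_def
  by (drule (1) has_derivative_add) (simp add: algebra_simps sum.distrib)

lemma has_gradient_diff:
  "has_gradient f F p \<Longrightarrow> has_gradient g G p \<Longrightarrow> has_gradient (\<lambda>q. f q - g q) (\<lambda>k. F k - G k) p"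
  unfolding has_gradient_def
  by (drule (1) has_derivative_diff) (simp add: algebra_simps sum_subtractf)

lemma has_gradient_minus: "has_gradient f F p \<Longrightarrow> has_gradient (\<lambda>q. - f q) (\<lambda>k. - F k) p"
  unfolding has_gradient_def
  by (drule has_derivative_minus) (simp add: sum_negf)

lemma has_gradient_mult:
  "has_gradient f F p \<Longrightarrow> has_gradient g G p \<Longrightarrow>
   has_gradient (\<lambda>q. f q * g q) (\<lambda>k. f p * G k + F k * g p) p"
  unfolding has_gradient_def
  by (drule (1) has_derivative_mult) (simp add: algebra_simps sum.distrib sum_distrib_left)

lemma has_gradient_compose:
  "(H has_real_derivative D) (at (f p)) \<Longrightarrow> has_gradient f F p \<Longrightarrow>
   has_gradient (\<lambda>q. H (f q)) (\<lambda>k. D * F k) p"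
  unfolding has_gradient_def has_field_derivative_def
  by (drule (1) has_derivative_compose[of f _ p UNIV H]) (simp add: algebra_simps sum_distrib_left)

lemma has_gradient_inverse:
  assumes "has_gradient f F p" "f p \<noteq> 0"
  shows "has_gradient (\<lambda>q. inverse (f q)) (\<lambda>k. - F k / (f p)^2) p"
  using has_gradient_compose[OF DERIV_inverse[OF assms(2)] assms(1)]
  by (rule has_gradient_cong) (simp add: assms(2) field_simps power2_eq_square)

lemma has_gradient_divide:
  assumes "has_gradient f F p" "has_gradient g G p" "g p \<noteq> 0"
  shows "has_gradient (\<lambda>q. f q / g q) (\<lambda>k. (F k * g p - f p * G k) / (g p)^2) p"
  using has_gradient_mult[OF assms(1) has_gradient_inverse[OF assms(2,3)]]
  by (simp add: divide_inverse[symmetric])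
    (erule has_gradient_cong; simp add: assms(3) field_simps power2_eq_square)

lemma has_gradient_power:
  assumes "has_gradient f F p"
  shows "has_gradient (\<lambda>q. (f q)^n) (\<lambda>k. real n * (f p)^(n-1) * F k) p"
  using has_gradient_compose[OF DERIV_pow assms] by simp

lemma has_gradient_ln:
  assumes "has_gradient f F p" "f p > 0"
  shows "has_gradient (\<lambda>q. ln (f q)) (\<lambda>k. F k / f p) p"
  using has_gradient_compose[OF DERIV_ln_divide[OF assms(2)] assms(1)]
  by (rule has_gradient_cong) simp

definition dt :: "4 \<Rightarrow> real" where
  "dt k = (if k = 0 then 1 else 0)"

lemma has_gradient_time:
  "(H has_real_derivative D) (at (q$0)) \<Longrightarrow> has_gradient (\<lambda>q. H (q$0)) (\<lambda>k. D * dt k) q"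
  unfolding dt_def by (rule has_gradient_compose[OF _ has_gradient_coord])

lemma has_gradient_time_compose:
  assumes "(H has_real_derivative D) (at (R (q$0)))" "(R has_real_derivative R') (at (q$0))"
  shows "has_gradient (\<lambda>q. H (R (q$0))) (\<lambda>k. D * R' * dt k) q"
  using has_gradient_compose[OF assms(1) has_gradient_time[OF assms(2)]]
  by (simp add: mult.assoc)

section \<open>Diagonal metrics \<open>-A\<^sup>2 dt\<^sup>2 + W\<^sup>2 (dx\<^sup>2 + dy\<^sup>2 + dz\<^sup>2)\<close> and their comoving observers\<close>

definition diag_metric :: "(pt \<Rightarrow> real) \<Rightarrow> (pt \<Rightarrow> real) \<Rightarrow> pt \<Rightarrow> 4 \<Rightarrow> 4 \<Rightarrow> real" where
  "diag_metric A W p i j = (if i \<noteq> j then 0 else if i = 0 then - ((A p)^2) else (W p)^2)"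

definition diag_metric_inv :: "(pt \<Rightarrow> real) \<Rightarrow> (pt \<Rightarrow> real) \<Rightarrow> pt \<Rightarrow> 4 \<Rightarrow> 4 \<Rightarrow> real" where
  "diag_metric_inv A W p i j = (if i \<noteq> j then 0 else if i = 0 then - (1 / (A p)^2) else 1 / (W p)^2)"

definition comoving_velocity :: "(pt \<Rightarrow> real) \<Rightarrow> pt \<Rightarrow> 4 \<Rightarrow> real" where
  "comoving_velocity A p i = (if i = 0 then 1 / A p else 0)"

definition perfect_fluid ::
  "(pt \<Rightarrow> real) \<Rightarrow> (pt \<Rightarrow> real) \<Rightarrow> (pt \<Rightarrow> real) \<Rightarrow> (pt \<Rightarrow> real) \<Rightarrow> pt \<Rightarrow> 4 \<Rightarrow> 4 \<Rightarrow> real" where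
  "perfect_fluid A W rho P q i j =
     (rho q + P q) * comoving_velocity A q i * comoving_velocity A q j + P q * diag_metric_inv A W q i j"

definition pd_diag_metric ::
  "(pt \<Rightarrow> real) \<Rightarrow> (pt \<Rightarrow> real) \<Rightarrow> (4 \<Rightarrow> real) \<Rightarrow> (4 \<Rightarrow> real) \<Rightarrow> pt \<Rightarrow> 4 \<Rightarrow> 4 \<Rightarrow> 4 \<Rightarrow> real" where
  "pd_diag_metric A W GA GW p k i j =
     (if i \<noteq> j then 0 else if i = 0 then -2 * A p * GA k else 2 * W p * GW k)"

context
  fixes A W :: "pt \<Rightarrow> real" and GA GW :: "4 \<Rightarrow> real" and p :: pt
  assumes grad_A: "has_gradient A GA p" and grad_W: "has_gradient W GW p"
    and A_ne_0: "A p \<noteq> 0" and W_ne_0: "W p \<noteq> 0"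
begin

lemma pd_diag_metric_eq: "pd k (\<lambda>q. diag_metric A W q i j) p = pd_diag_metric A W GA GW p k i j"
proof -
  have "has_gradient (\<lambda>q. - ((A q)^2)) (\<lambda>k. -2 * A p * GA k) p"
    using has_gradient_minus[OF has_gradient_power[OF grad_A, of 2]] by (rule has_gradient_cong) simp
  moreover have "has_gradient (\<lambda>q. (W q)^2) (\<lambda>k. 2 * W p * GW k) p"
    using has_gradient_power[OF grad_W, of 2] by (rule has_gradient_cong) simp
  ultimately show ?thesis
    by (auto simp: diag_metric_def pd_diag_metric_def pd_has_gradient pd_const)
qed

lemma christoffel_diag_metric:
  "christoffel (diag_metric A W) (diag_metric_inv A W) p l m n =
     1/2 * diag_metric_inv A W p l l
       * (pd_diag_metric A W GA GW p m l n + pd_diag_metric A W GA GW p n l m - pd_diag_metric A W GA GW p l m n)"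
  unfolding christoffel_def pd_diag_metric_eq
  by (subst sum_UNIV_single[where l=l]) (auto simp: diag_metric_inv_def)

lemma lower_comoving_velocity:
  "lower (diag_metric A W) (comoving_velocity A) q n = (if n = 0 then - A q else 0)"
  unfolding lower_def by (simp add: sum_UNIV_4 diag_metric_def comoving_velocity_def power2_eq_square)

lemma cov_covec_comoving_velocity:
  "cov_covec (diag_metric A W) (diag_metric_inv A W) (lower (diag_metric A W) (comoving_velocity A)) p m n =
     (if n = 0 then 0 else if m = 0 then GA n else if m = n then W p * GW 0 / A p else 0)"
proof -
  have pd_lower: "pd m (\<lambda>q. lower (diag_metric A W) (comoving_velocity A) q n) p = (if n = 0 then - GA m else 0)"
    using pd_has_gradient[OF has_gradient_minus[OF grad_A]]
    by (simp add: lower_comoving_velocity pd_const)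
  have sum_eq: "(\<Sum>l\<in>UNIV. christoffel (diag_metric A W) (diag_metric_inv A W) p l m n
          * lower (diag_metric A W) (comoving_velocity A) p l)
        = christoffel (diag_metric A W) (diag_metric_inv A W) p 0 m n * (- A p)"
    by (subst sum_UNIV_single[where l=0]) (auto simp: lower_comoving_velocity)
  show ?thesis
    unfolding cov_covec_def pd_lower sum_eq unfolding christoffel_diag_metric
    using A_ne_0 W_ne_0
    by (auto simp: pd_diag_metric_def diag_metric_inv_def field_simps power2_eq_square)
qed

lemma accel_comoving_velocity:
  "accel (diag_metric A W) (diag_metric_inv A W) (comoving_velocity A) p n = (if n = 0 then 0 else GA n / A p)"
  unfolding accel_def cov_covec_comoving_velocity
  by (simp add: sum_UNIV_4 comoving_velocity_def)

lemma expansion_comoving_velocity: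
  "expansion (diag_metric A W) (diag_metric_inv A W) (comoving_velocity A) p = 3 * GW 0 / (W p * A p)"
  unfolding expansion_def cov_covec_comoving_velocity using A_ne_0 W_ne_0
  by (simp add: sum_UNIV_4 diag_metric_inv_def field_simps power2_eq_square)

lemma shear_comoving_velocity:
  "shear (diag_metric A W) (diag_metric_inv A W) (comoving_velocity A) p m n = 0"
  unfolding shear_def cov_covec_comoving_velocity accel_comoving_velocity
    expansion_comoving_velocity lower_comoving_velocity
  using A_ne_0 W_ne_0 by (auto simp: diag_metric_def field_simps power2_eq_square)

lemma accel_minus_expansion_comoving_velocity:
  "accel (diag_metric A W) (diag_metric_inv A W) (comoving_velocity A) p n
     - expansion (diag_metric A W) (diag_metric_inv A W) (comoving_velocity A) p / 3
       * lower (diag_metric A W) (comoving_velocity A) p n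
   = (if n = 0 then GW 0 / W p else GA n / A p)"
  unfolding accel_comoving_velocity expansion_comoving_velocity lower_comoving_velocity
  using A_ne_0 W_ne_0 by (auto simp: field_simps)

lemma perfect_fluid_eq:
  "perfect_fluid A W rho P q i j =
     (if i \<noteq> j then 0 else if i = 0 then rho q / (A q)^2 else P q / (W q)^2)"
  by (simp add: perfect_fluid_def comoving_velocity_def diag_metric_inv_def field_simps power2_eq_square)

lemma div2_perfect_fluid:
  assumes grad_rho: "has_gradient rho Grho p" and grad_P: "has_gradient P GP p"
  shows "div2 (diag_metric A W) (diag_metric_inv A W) (perfect_fluid A W rho P) p n =
    (if n = 0 then (Grho 0 + 3 * (GW 0 / W p) * (rho p + P p)) / (A p)^2
     else (GP n + (GA n / A p) * (rho p + P p)) / (W p)^2)"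
proof -
  have "has_gradient (\<lambda>q. rho q / (A q)^2)
          (\<lambda>k. (Grho k * (A p)^2 - rho p * (2 * A p * GA k)) / ((A p)^2)^2) p"
    using has_gradient_divide[OF grad_rho has_gradient_power[OF grad_A, of 2]] A_ne_0
    by (rule_tac has_gradient_cong) auto
  moreover have "has_gradient (\<lambda>q. P q / (W q)^2)
          (\<lambda>k. (GP k * (W p)^2 - P p * (2 * W p * GW k)) / ((W p)^2)^2) p"
    using has_gradient_divide[OF grad_P has_gradient_power[OF grad_W, of 2]] W_ne_0
    by (rule_tac has_gradient_cong) auto
  ultimately have "pd m (\<lambda>q. perfect_fluid A W rho P q i j) p = (if i \<noteq> j then 0 else if i = 0 then
       (Grho m * (A p)^2 - rho p * (2 * A p * GA m)) / ((A p)^2)^2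
     else (GP m * (W p)^2 - P p * (2 * W p * GW m)) / ((W p)^2)^2)" for m i j
    unfolding perfect_fluid_eq by (auto simp: pd_has_gradient pd_const)
  then show ?thesis
    using UNIV_4_cases[of n] A_ne_0 W_ne_0
    unfolding div2_def christoffel_diag_metric
    by (auto simp: sum_UNIV_4 perfect_fluid_eq pd_diag_metric_def diag_metric_inv_def field_simps power2_eq_square)
qed

lemma div2_radiation_fluid_eq_0:
  assumes grad_Theta: "has_gradient Theta GTheta p"
    and GTheta_eq: "\<And>k. GTheta k = - Theta p *
      (accel (diag_metric A W) (diag_metric_inv A W) (comoving_velocity A) p k
       - expansion (diag_metric A W) (diag_metric_inv A W) (comoving_velocity A) p / 3
         * lower (diag_metric A W) (comoving_velocity A) p k)"
  shows "div2 (diag_metric A W) (diag_metric_inv A W)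
           (perfect_fluid A W (\<lambda>q. a * Theta q ^ 4) (\<lambda>q. a * Theta q ^ 4 / 3)) p n = 0"
proof -
  have grad_rho: "has_gradient (\<lambda>q. a * Theta q ^ 4) (\<lambda>k. 4 * a * Theta p ^ 3 * GTheta k) p"
    using has_gradient_mult[OF has_gradient_const has_gradient_power[OF grad_Theta, of 4]]
    by (rule has_gradient_cong) simp
  have grad_P: "has_gradient (\<lambda>q. a * Theta q ^ 4 / 3) (\<lambda>k. 4 / 3 * a * Theta p ^ 3 * GTheta k) p"
    by (rule has_gradient_cong[OF has_gradient_divide[OF grad_rho has_gradient_const]])
      (simp_all add: field_simps)
  have "Theta p ^ 4 = Theta p * Theta p ^ 3" by (simp add: eval_nat_numeral)
  then show ?thesis
    unfolding div2_perfect_fluid[OF grad_rho grad_P] GTheta_eq accel_minus_expansion_comoving_velocity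
    using A_ne_0 W_ne_0 by (auto simp: field_simps)
qed

end

section \<open>The Stephani universe\<close>

definition st_D :: "real \<Rightarrow> pt \<Rightarrow> real" where
  "st_D \<epsilon> q = 1 + \<epsilon> / 4 * rsq q"

definition st_w_grad :: "real \<Rightarrow> pt \<Rightarrow> 4 \<Rightarrow> real" where
  "st_w_grad \<epsilon> q k = (if k = 0 then 0 else
     (2 * (if k = 3 then 1 else 0) * st_D \<epsilon> q - \<epsilon> * q$3 * q$k) / (st_D \<epsilon> q)^2)"

definition st_w_hess :: "real \<Rightarrow> pt \<Rightarrow> 4 \<Rightarrow> 4 \<Rightarrow> real" where
  "st_w_hess \<epsilon> q i k = (if k = 0 then 0 else
     (- \<epsilon> * st_D \<epsilon> q * ((if i = 3 then 1 else 0) * q$k + (if k = 3 then 1 else 0) * q$i)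
      - \<epsilon> * q$3 * (if i = k then 1 else 0) * st_D \<epsilon> q + \<epsilon>^2 * q$3 * q$i * q$k) / (st_D \<epsilon> q)^3)"

lemma st_w_grad_time [simp]: "st_w_grad \<epsilon> q 0 = 0"
  by (simp add: st_w_grad_def)

lemma st_w_hess_time [simp]: "st_w_hess \<epsilon> q i 0 = 0"
  by (simp add: st_w_hess_def)

lemma st_w_hess_sym: "i \<noteq> 0 \<Longrightarrow> k \<noteq> 0 \<Longrightarrow> st_w_hess \<epsilon> q i k = st_w_hess \<epsilon> q k i"
  by (simp add: st_w_hess_def algebra_simps)

lemma has_gradient_st_D: "has_gradient (st_D \<epsilon>) (\<lambda>k. if k = 0 then 0 else \<epsilon> / 2 * q$k) q"
  unfolding st_D_def[abs_def] rsq_def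
  by (rule has_gradient_cong,
      (rule has_gradient_add has_gradient_mult has_gradient_const has_gradient_power has_gradient_coord)+)
     (use UNIV_4_cases in auto)

context
  fixes \<epsilon> :: real and q :: pt
  assumes D_ne_0: "st_D \<epsilon> q \<noteq> 0"
begin

lemma has_gradient_st_w: "has_gradient (st_w \<epsilon>) (st_w_grad \<epsilon> q) q"
proof -
  have "st_w \<epsilon> = (\<lambda>q. 2 * q$3 / st_D \<epsilon> q)"
    by (simp add: st_w_def[abs_def] st_D_def[abs_def])
  then show ?thesis
    by (simp only:)
      (rule has_gradient_cong,
       (rule has_gradient_divide has_gradient_mult has_gradient_const has_gradient_coord has_gradient_st_D D_ne_0)+,
       use UNIV_4_cases in \<open>auto simp: st_w_grad_def field_simps\<close>)
qed

lemma has_gradient_st_w_grad: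
  assumes "i \<noteq> 0"
  shows "has_gradient (\<lambda>q. st_w_grad \<epsilon> q i) (st_w_hess \<epsilon> q i) q"
proof -
  have "(\<lambda>q. st_w_grad \<epsilon> q i) =
      (\<lambda>q. (2 * (if i = 3 then 1 else 0) * st_D \<epsilon> q - \<epsilon> * q$3 * q$i) / (st_D \<epsilon> q)^2)"
    using assms by (simp add: st_w_grad_def)
  then show ?thesis
    by (simp only:)
      (rule has_gradient_cong,
       (rule has_gradient_divide has_gradient_diff has_gradient_mult has_gradient_const has_gradient_coord
          has_gradient_st_D has_gradient_power)+,
       use D_ne_0 assms in \<open>auto simp: st_w_hess_def field_simps power2_eq_square power3_eq_cube\<close>)
qed

end

definition st_den :: "(real \<Rightarrow> real) \<Rightarrow> (real \<Rightarrow> real) \<Rightarrow> real \<Rightarrow> pt \<Rightarrow> real" where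
  "st_den R B \<epsilon> q = 1 + B (R (q$0)) * st_w \<epsilon> q"

definition st_num :: "(real \<Rightarrow> real) \<Rightarrow> (real \<Rightarrow> real) \<Rightarrow> real \<Rightarrow> pt \<Rightarrow> real" where
  "st_num R B \<epsilon> q = 1 + (B (R (q$0)) - R (q$0) * deriv B (R (q$0))) * st_w \<epsilon> q"

lemma st_alpha_eq: "st_alpha R B \<epsilon> q = st_num R B \<epsilon> q / st_den R B \<epsilon> q"
  by (simp add: st_alpha_def st_num_def st_den_def)

lemma st_Omega_eq: "st_Omega R B \<epsilon> q = R (q$0) / (st_den R B \<epsilon> q * st_D \<epsilon> q)"
  by (simp add: st_Omega_def st_L_def st_den_def st_D_def)

text \<open>\<open>\<psi> = \<partial> ln \<alpha> / \<partial>w\<close> at fixed \<open>t\<close>, so \<open>\<psi> \<partial>\<^sub>i w\<close> is the spatial part \<open>\<partial>\<^sub>i ln \<alpha>\<close> of the acceleration.\<close>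

definition st_psi :: "(real \<Rightarrow> real) \<Rightarrow> (real \<Rightarrow> real) \<Rightarrow> real \<Rightarrow> pt \<Rightarrow> real" where
  "st_psi R B \<epsilon> q = - R (q$0) * deriv B (R (q$0)) / (st_den R B \<epsilon> q * st_num R B \<epsilon> q)"

definition st_omega_form :: "(real \<Rightarrow> real) \<Rightarrow> (real \<Rightarrow> real) \<Rightarrow> real \<Rightarrow> pt \<Rightarrow> 4 \<Rightarrow> real" where
  "st_omega_form R B \<epsilon> q n = (if n = 0 then deriv R (q$0) * st_alpha R B \<epsilon> q / R (q$0)
     else st_psi R B \<epsilon> q * st_w_grad \<epsilon> q n)"

lemma st_g_eq: "st_g R B \<epsilon> = diag_metric (st_alpha R B \<epsilon>) (st_Omega R B \<epsilon>)"
  by (intro ext) (simp add: st_g_def diag_metric_def)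

lemma st_gi_eq: "st_gi R B \<epsilon> = diag_metric_inv (st_alpha R B \<epsilon>) (st_Omega R B \<epsilon>)"
  by (intro ext) (simp add: st_gi_def diag_metric_inv_def)

lemma st_u_eq: "st_u R B \<epsilon> = comoving_velocity (st_alpha R B \<epsilon>)"
  by (intro ext) (simp add: st_u_def comoving_velocity_def)

lemma st_fluidT_eq: "st_fluidT R B \<epsilon> rho P = perfect_fluid (st_alpha R B \<epsilon>) (st_Omega R B \<epsilon>) rho P"
  by (intro ext) (simp add: st_fluidT_def perfect_fluid_def st_u_eq st_gi_eq)

locale st_regular =
  fixes R B :: "real \<Rightarrow> real" and \<epsilon> :: real and q :: pt
  assumes R_deriv: "(R has_real_derivative deriv R (q$0)) (at (q$0))"
    and R1_deriv: "(deriv R has_real_derivative deriv (deriv R) (q$0)) (at (q$0))"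
    and B_deriv: "(B has_real_derivative deriv B (R (q$0))) (at (R (q$0)))"
    and B1_deriv: "(deriv B has_real_derivative deriv (deriv B) (R (q$0))) (at (R (q$0)))"
    and D_ne_0: "st_D \<epsilon> q \<noteq> 0"
    and den_ne_0: "st_den R B \<epsilon> q \<noteq> 0"
    and Rt_pos: "R (q$0) > 0"
    and R1_ne_0: "deriv R (q$0) \<noteq> 0"
    and alpha_pos: "st_alpha R B \<epsilon> q > 0"
begin

abbreviation "Rt \<equiv> R (q$0)"
abbreviation "R1 \<equiv> deriv R (q$0)"
abbreviation "b0 \<equiv> B Rt"
abbreviation "b1 \<equiv> deriv B Rt"
abbreviation "b2 \<equiv> deriv (deriv B) Rt"
abbreviation "den \<equiv> st_den R B \<epsilon> q"
abbreviation "num \<equiv> st_num R B \<epsilon> q"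

lemma num_ne_0: "num \<noteq> 0"
  using alpha_pos by (auto simp: st_alpha_eq)

lemma num_eq: "num = den - Rt * b1 * st_w \<epsilon> q"
  by (simp add: st_num_def st_den_def algebra_simps)

lemma has_gradient_st_den:
  "has_gradient (st_den R B \<epsilon>) (\<lambda>k. if k = 0 then b1 * R1 * st_w \<epsilon> q else b0 * st_w_grad \<epsilon> q k) q"
  unfolding st_den_def[abs_def]
  by (rule has_gradient_cong,
      (rule has_gradient_add has_gradient_mult has_gradient_const
         has_gradient_time_compose[OF B_deriv R_deriv] has_gradient_st_w[OF D_ne_0])+)
     (simp add: dt_def)

lemma has_gradient_st_num:
  "has_gradient (st_num R B \<epsilon>)
     (\<lambda>k. if k = 0 then - R1 * Rt * b2 * st_w \<epsilon> q else (b0 - Rt * b1) * st_w_grad \<epsilon> q k) q"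
  unfolding st_num_def[abs_def]
  by (rule has_gradient_cong,
      (rule has_gradient_add has_gradient_diff has_gradient_mult has_gradient_const
         has_gradient_time_compose[OF B_deriv R_deriv] has_gradient_time_compose[OF B1_deriv R_deriv]
         has_gradient_time[OF R_deriv] has_gradient_st_w[OF D_ne_0])+)
     (auto simp: dt_def algebra_simps)

lemma has_gradient_st_alpha:
  "has_gradient (st_alpha R B \<epsilon>)
     (\<lambda>k. if k = 0 then - R1 * st_w \<epsilon> q * (Rt * b2 * den + b1 * num) / den^2
          else - Rt * b1 * st_w_grad \<epsilon> q k / den^2) q"
  unfolding st_alpha_eq[abs_def]
  by (rule has_gradient_cong[OF has_gradient_divide[OF has_gradient_st_num has_gradient_st_den den_ne_0]])
     (auto simp: st_num_def st_den_def field_simps)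

lemma has_gradient_st_Omega:
  obtains GW where "has_gradient (st_Omega R B \<epsilon>) GW q"
    and "GW 0 = R1 * st_alpha R B \<epsilon> q * st_Omega R B \<epsilon> q / Rt"
proof -
  have "has_gradient (\<lambda>q. R (q$0) / (st_den R B \<epsilon> q * st_D \<epsilon> q))
     (\<lambda>k. (R1 * dt k * (den * st_D \<epsilon> q) - Rt * (den * (if k = 0 then 0 else \<epsilon> / 2 * q$k)
        + (if k = 0 then b1 * R1 * st_w \<epsilon> q else b0 * st_w_grad \<epsilon> q k) * st_D \<epsilon> q))
        / (den * st_D \<epsilon> q)^2) q"
    using D_ne_0 den_ne_0
    by (intro has_gradient_divide has_gradient_mult has_gradient_time[OF R_deriv]
          has_gradient_st_den has_gradient_st_D) simp
  then show thesis
    using that D_ne_0 den_ne_0 Rt_pos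
    unfolding st_Omega_eq[abs_def]
    by (simp add: st_alpha_eq num_eq dt_def field_simps power2_eq_square)
qed

lemma has_gradient_st_psi:
  "has_gradient (st_psi R B \<epsilon>)
     (\<lambda>k. if k = 0 then - R1 * b1 / den^2 - R1 * Rt * b2 / num^2
          else Rt * b1 * (den * (b0 - Rt * b1) + b0 * num) / (den * num)^2 * st_w_grad \<epsilon> q k) q"
proof -
  let ?w = "st_w \<epsilon> q"
  have grad: "has_gradient (st_psi R B \<epsilon>)
     (\<lambda>k. if k = 0
          then ((- R1 * b1 - Rt * (b2 * R1)) * (den * num)
                - (- Rt * b1) * (den * (- R1 * Rt * b2 * ?w) + b1 * R1 * ?w * num)) / (den * num)^2
          else Rt * b1 * (den * (b0 - Rt * b1) + b0 * num) / (den * num)^2 * st_w_grad \<epsilon> q k) q"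
    unfolding st_psi_def[abs_def]
    by (rule has_gradient_cong,
        (rule has_gradient_divide has_gradient_mult has_gradient_minus has_gradient_time[OF R_deriv]
          has_gradient_time_compose[OF B1_deriv R_deriv] has_gradient_time_compose[OF B_deriv R_deriv]
          has_gradient_st_den has_gradient_st_num)+,
        use den_ne_0 num_ne_0 in \<open>auto simp: dt_def field_simps\<close>)
  have "(- R1 * b1 - Rt * (b2 * R1)) * (den * num)
          - (- Rt * b1) * (den * (- R1 * Rt * b2 * ?w) + b1 * R1 * ?w * num)
        = - R1 * b1 * num^2 - R1 * Rt * b2 * den^2"
    unfolding num_eq by (simp add: power2_eq_square algebra_simps)
  then have time_component: "((- R1 * b1 - Rt * (b2 * R1)) * (den * num)
          - (- Rt * b1) * (den * (- R1 * Rt * b2 * ?w) + b1 * R1 * ?w * num)) / (den * num)^2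
        = - R1 * b1 / den^2 - R1 * Rt * b2 / num^2"
    using den_ne_0 num_ne_0 by (simp add: field_simps power2_eq_square)
  show ?thesis
    using grad by (rule has_gradient_cong) (simp only: time_component)
qed

lemma Omega_ne_0: "st_Omega R B \<epsilon> q \<noteq> 0"
  using D_ne_0 den_ne_0 Rt_pos by (simp add: st_Omega_eq)

lemma st_shear_eq_0: "st_shear R B \<epsilon> q m n = 0"
proof -
  obtain GW where "has_gradient (st_Omega R B \<epsilon>) GW q"
    by (rule has_gradient_st_Omega)
  with has_gradient_st_alpha alpha_pos Omega_ne_0 show ?thesis
    unfolding st_shear_def st_g_eq st_gi_eq st_u_eq by (intro shear_comoving_velocity) auto
qed

lemma st_omega_eq_form: "st_omega R B \<epsilon> q n = st_omega_form R B \<epsilon> q n"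
proof -
  obtain GW where grad_W: "has_gradient (st_Omega R B \<epsilon>) GW q"
    and GW_time: "GW 0 = R1 * st_alpha R B \<epsilon> q * st_Omega R B \<epsilon> q / Rt"
    by (rule has_gradient_st_Omega)
  have "st_omega R B \<epsilon> q n = (if n = 0 then GW 0 / st_Omega R B \<epsilon> q
      else - Rt * b1 * st_w_grad \<epsilon> q n / den^2 / st_alpha R B \<epsilon> q)"
    unfolding st_omega_def st_g_eq st_gi_eq st_u_eq
    using accel_minus_expansion_comoving_velocity[OF has_gradient_st_alpha grad_W _ Omega_ne_0] alpha_pos
    by simp
  then show ?thesis
    using Omega_ne_0 den_ne_0 num_ne_0 Rt_pos
    by (simp add: GW_time st_omega_form_def st_psi_def st_alpha_eq field_simps power2_eq_square)
qed

lemma pd_st_omega_form_time: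
  assumes "k \<noteq> 0"
  shows "pd k (\<lambda>q. st_omega_form R B \<epsilon> q 0) q = - R1 * b1 * st_w_grad \<epsilon> q k / den^2"
proof -
  have "(\<lambda>q. st_omega_form R B \<epsilon> q 0) = (\<lambda>q. deriv R (q$0) * st_alpha R B \<epsilon> q / R (q$0))"
    by (simp add: st_omega_form_def)
  moreover have "has_gradient (\<lambda>q. deriv R (q$0) * st_alpha R B \<epsilon> q / R (q$0))
     (\<lambda>k. ((R1 * (if k = 0 then - R1 * st_w \<epsilon> q * (Rt * b2 * den + b1 * num) / den^2
          else - Rt * b1 * st_w_grad \<epsilon> q k / den^2) + deriv (deriv R) (q$0) * dt k * st_alpha R B \<epsilon> q) * Rt
        - R1 * st_alpha R B \<epsilon> q * (R1 * dt k)) / Rt^2) q"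
    using Rt_pos
    by (intro has_gradient_divide has_gradient_mult has_gradient_time R_deriv R1_deriv has_gradient_st_alpha) simp
  ultimately show ?thesis
    using assms Rt_pos by (simp add: pd_has_gradient dt_def field_simps power2_eq_square)
qed

lemma pd_st_omega_form_space:
  assumes "j \<noteq> 0"
  shows "pd m (\<lambda>q. st_omega_form R B \<epsilon> q j) q
       = st_psi R B \<epsilon> q * st_w_hess \<epsilon> q j m
         + (if m = 0 then - R1 * b1 / den^2 - R1 * Rt * b2 / num^2
            else Rt * b1 * (den * (b0 - Rt * b1) + b0 * num) / (den * num)^2 * st_w_grad \<epsilon> q m)
           * st_w_grad \<epsilon> q j"
proof -
  have "(\<lambda>q. st_omega_form R B \<epsilon> q j) = (\<lambda>q. st_psi R B \<epsilon> q * st_w_grad \<epsilon> q j)"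
    using assms by (simp add: st_omega_form_def)
  then show ?thesis
    using pd_has_gradient[OF has_gradient_mult[OF has_gradient_st_psi has_gradient_st_w_grad[OF D_ne_0 assms]]]
    by simp
qed

lemma pd_st_omega_form_sym_space:
  assumes "i \<noteq> 0" "k \<noteq> 0"
  shows "pd k (\<lambda>q. st_omega_form R B \<epsilon> q i) q = pd i (\<lambda>q. st_omega_form R B \<epsilon> q k) q"
  using assms by (simp add: pd_st_omega_form_space st_w_hess_sym)

lemma pd_st_omega_form_time_space:
  assumes "i \<noteq> 0"
  shows "pd 0 (\<lambda>q. st_omega_form R B \<epsilon> q i) q - pd i (\<lambda>q. st_omega_form R B \<epsilon> q 0) q
       = - R1 * Rt * b2 * st_w_grad \<epsilon> q i / num^2"
  using assms by (simp add: pd_st_omega_form_space pd_st_omega_form_time field_simps)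

lemma has_gradient_st_beta:
  assumes "b2 = 0"
  shows "has_gradient (\<lambda>q. R (q$0) * st_alpha R B \<epsilon> q)
           (\<lambda>n. Rt * st_alpha R B \<epsilon> q * st_omega_form R B \<epsilon> q n) q"
  using has_gradient_mult[OF has_gradient_time[OF R_deriv] has_gradient_st_alpha]
proof (rule has_gradient_cong)
  fix k :: 4
  have "Rt * (- R1 * st_w \<epsilon> q * (Rt * b2 * den + b1 * num) / den^2) + R1 * st_alpha R B \<epsilon> q
      = R1 * num * (den - Rt * b1 * st_w \<epsilon> q) / den^2"
    using assms den_ne_0 by (simp add: st_alpha_eq field_simps power2_eq_square)
  also have "\<dots> = Rt * st_alpha R B \<epsilon> q * (R1 * st_alpha R B \<epsilon> q / Rt)"
    using Rt_pos by (simp add: st_alpha_eq num_eq[symmetric] power2_eq_square)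
  finally show "Rt * (if k = 0 then - R1 * st_w \<epsilon> q * (Rt * b2 * den + b1 * num) / den^2
          else - Rt * b1 * st_w_grad \<epsilon> q k / den^2) + R1 * dt k * st_alpha R B \<epsilon> q
        = Rt * st_alpha R B \<epsilon> q * st_omega_form R B \<epsilon> q k"
    using den_ne_0 num_ne_0 by (simp add: dt_def st_omega_form_def st_psi_def st_alpha_eq power2_eq_square)
qed

lemma pd_ln_st_beta:
  assumes "b2 = 0"
  shows "pd m (\<lambda>q. ln (R (q$0) * st_alpha R B \<epsilon> q)) q = st_omega R B \<epsilon> q m"
proof -
  have "Rt * st_alpha R B \<epsilon> q > 0" using Rt_pos alpha_pos by simp
  from pd_has_gradient[OF has_gradient_ln[OF has_gradient_st_beta[OF assms] this]] show ?thesis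
    using Rt_pos alpha_pos by (simp add: st_omega_eq_form)
qed

end

text \<open>Shifting \<open>p\<close> in \<open>x\<close> stays in \<open>U\<close> at the same time; \<open>\<partial>\<^sub>x w = \<partial>\<^sub>z w = 0\<close> at both points
  would force \<open>\<epsilon> z = 0\<close> and then \<open>D = 0\<close>.\<close>

lemma st_w_grad_nonvanishing:
  assumes "open U" "p \<in> U" "\<And>q. q \<in> U \<Longrightarrow> st_D \<epsilon> q \<noteq> 0"
  obtains q i where "q \<in> U" "q$0 = p$0" "i \<noteq> 0" "st_w_grad \<epsilon> q i \<noteq> 0"
proof -
  have "\<exists>q\<in>U. q$0 = p$0 \<and> (\<exists>i. i \<noteq> 0 \<and> st_w_grad \<epsilon> q i \<noteq> 0)"
  proof (rule ccontr)
    assume "\<not> ?thesis"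
    then have vanish: "\<And>q i. q \<in> U \<Longrightarrow> q$0 = p$0 \<Longrightarrow> i \<noteq> 0 \<Longrightarrow> st_w_grad \<epsilon> q i = 0"
      by blast
    have Dp: "st_D \<epsilon> p \<noteq> 0" using assms(2,3) by blast
    have "st_w_grad \<epsilon> p 3 = 0" "st_w_grad \<epsilon> p 1 = 0" using vanish assms(2) by auto
    then have z_eq: "2 * st_D \<epsilon> p = \<epsilon> * p$3 * p$3" and x_eq: "\<epsilon> * p$3 * p$1 = 0"
      using Dp by (auto simp: st_w_grad_def)
    obtain e where e: "e > 0" "ball p e \<subseteq> U" using assms(1,2) open_contains_ball by blast
    define p' where "p' = p + (e/2) *\<^sub>R axis 1 (1::real)"
    have "dist p p' < e" using e by (simp add: p'_def dist_norm)
    then have p': "p' \<in> U" using e by auto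
    have "p'$0 = p$0" "p'$3 = p$3" "p'$1 = p$1 + e/2" by (simp_all add: p'_def axis_def)
    moreover have "st_w_grad \<epsilon> p' 1 = 0" using vanish p' \<open>p'$0 = p$0\<close> by simp
    ultimately have "\<epsilon> * p$3 * (p$1 + e/2) = 0" using assms(3)[OF p'] by (simp add: st_w_grad_def)
    then have "\<epsilon> * p$3 * p$1 + \<epsilon> * p$3 * (e/2) = 0" by (simp add: algebra_simps)
    with x_eq have "\<epsilon> * p$3 * (e/2) = 0" by linarith
    with e have "\<epsilon> * p$3 = 0" by simp
    with z_eq Dp show False by simp
  qed
  then show thesis using that by blast
qed

lemma closed_on_st_omega_iff:
  assumes "open U" and regular: "\<And>q. q \<in> U \<Longrightarrow> st_regular R B \<epsilon> q"
  shows "closed_on U (st_omega R B \<epsilon>) \<longleftrightarrow> (\<forall>p\<in>U. deriv (deriv B) (R (p$0)) = 0)"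
proof -
  have pd_omega: "pd m (\<lambda>q. st_omega R B \<epsilon> q n) p = pd m (\<lambda>q. st_omega_form R B \<epsilon> q n) p"
    if "p \<in> U" for p m n
    by (rule pd_cong_open[OF assms(1) that]) (simp add: st_regular.st_omega_eq_form regular)
  show ?thesis
  proof
    assume closed: "closed_on U (st_omega R B \<epsilon>)"
    show "\<forall>p\<in>U. deriv (deriv B) (R (p$0)) = 0"
    proof
      fix p assume "p \<in> U"
      moreover have "\<And>q. q \<in> U \<Longrightarrow> st_D \<epsilon> q \<noteq> 0"
        using regular st_regular.D_ne_0 by blast
      ultimately obtain q i where q: "q \<in> U" "q$0 = p$0" "i \<noteq> 0" "st_w_grad \<epsilon> q i \<noteq> 0"
        using st_w_grad_nonvanishing assms(1) by blast
      interpret st_regular R B \<epsilon> q using regular q(1) .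
      have "pd 0 (\<lambda>q. st_omega R B \<epsilon> q i) q = pd i (\<lambda>q. st_omega R B \<epsilon> q 0) q"
        using closed q(1) unfolding closed_on_def by blast
      then have "- R1 * Rt * b2 * st_w_grad \<epsilon> q i / num^2 = 0"
        using pd_st_omega_form_time_space[OF q(3)] pd_omega[OF q(1)] by simp
      then show "deriv (deriv B) (R (p$0)) = 0"
        using q(2,4) R1_ne_0 Rt_pos num_ne_0 by simp
    qed
  next
    assume b2: "\<forall>p\<in>U. deriv (deriv B) (R (p$0)) = 0"
    show "closed_on U (st_omega R B \<epsilon>)"
      unfolding closed_on_def
    proof (intro ballI allI)
      fix p m n assume p: "p \<in> U"
      interpret st_regular R B \<epsilon> p using regular p .
      have time_space: "pd 0 (\<lambda>q. st_omega_form R B \<epsilon> q i) p = pd i (\<lambda>q. st_omega_form R B \<epsilon> q 0) p"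
        if "i \<noteq> 0" for i
        using pd_st_omega_form_time_space[OF that] b2 p by simp
      show "pd m (\<lambda>q. st_omega R B \<epsilon> q n) p = pd n (\<lambda>q. st_omega R B \<epsilon> q m) p"
        unfolding pd_omega[OF p]
        using time_space pd_st_omega_form_sym_space by (cases "m = 0"; cases "n = 0") auto
    qed
  qed
qed

lemma derivative_eq_0_if_time_comp_eq_0:
  fixes U :: "pt set"
  assumes "open U" "p \<in> U" "(R has_real_derivative R1) (at (p$0))" "R1 \<noteq> 0"
    and "(H has_real_derivative D) (at (R (p$0)))" "\<And>q. q \<in> U \<Longrightarrow> H (R (q$0)) = 0"
  shows "D = 0"
proof -
  have "pd 0 (\<lambda>q. H (R (q$0))) p = D * R1"
    using pd_has_gradient[OF has_gradient_time_compose[OF assms(5,3)]] by (simp add: dt_def)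
  moreover have "pd 0 (\<lambda>q. H (R (q$0))) p = pd 0 (\<lambda>q. 0) p"
    by (rule pd_cong_open[OF assms(1,2)]) (simp add: assms(6))
  ultimately show ?thesis using assms(4) by (simp add: pd_const)
qed

lemma st_linear_b_derivs:
  assumes "open U" and regular: "\<And>q. q \<in> U \<Longrightarrow> st_regular R B \<epsilon> q"
    and linear: "\<And>q. q \<in> U \<Longrightarrow> B (R (q$0)) = c1 + c2 * R (q$0)" and "p \<in> U"
  shows "deriv B (R (p$0)) = c2" and "deriv (deriv B) (R (p$0)) = 0"
proof -
  have b1_eq: "deriv B (R (q$0)) = c2" if "q \<in> U" for q
  proof -
    interpret st_regular R B \<epsilon> q using regular that .
    have "((\<lambda>x. B x - (c1 + c2 * x)) has_real_derivative b1 - c2) (at Rt)"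
      using B_deriv by (auto intro!: derivative_eq_intros)
    then have "b1 - c2 = 0"
      by (rule derivative_eq_0_if_time_comp_eq_0[OF assms(1) that R_deriv R1_ne_0]) (simp add: linear)
    then show ?thesis by simp
  qed
  then show "deriv B (R (p$0)) = c2" using assms(4) .
  interpret st_regular R B \<epsilon> p using regular assms(4) .
  have "((\<lambda>x. deriv B x - c2) has_real_derivative b2) (at Rt)"
    using B1_deriv by (auto intro!: derivative_eq_intros)
  then show "deriv (deriv B) (R (p$0)) = 0"
    by (rule derivative_eq_0_if_time_comp_eq_0[OF assms(1,4) R_deriv R1_ne_0]) (simp add: b1_eq)
qed

lemma (in st_regular) radiation_temperature_eq:
  assumes "b0 = c1 + c2 * Rt" "b1 = c2"
  shows "Th0 * R0 / Rt * (1 + c2 * st_w \<epsilon> q * Rt / (1 + c1 * st_w \<epsilon> q)) = Th0 * R0 / (Rt * st_alpha R B \<epsilon> q)"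
proof -
  have "num = 1 + c1 * st_w \<epsilon> q" "den = 1 + c1 * st_w \<epsilon> q + c2 * st_w \<epsilon> q * Rt"
    using assms by (simp_all add: st_num_def st_den_def algebra_simps)
  then show ?thesis
    using num_ne_0 Rt_pos by (simp add: st_alpha_eq field_simps)
qed

lemma div2_st_radiation_fluid_eq_0:
  assumes "open U" and regular: "\<And>q. q \<in> U \<Longrightarrow> st_regular R B \<epsilon> q"
    and linear: "\<And>q. q \<in> U \<Longrightarrow> B (R (q$0)) = c1 + c2 * R (q$0)" and p: "p \<in> U"
    and Theta_def: "Theta = (\<lambda>q. Th0 * R0 / R (q$0) * (1 + c2 * st_w \<epsilon> q * R (q$0) / (1 + c1 * st_w \<epsilon> q)))"
  shows "div2 (st_g R B \<epsilon>) (st_gi R B \<epsilon>) (st_fluidT R B \<epsilon> (\<lambda>q. a * Theta q ^ 4) (\<lambda>q. a * Theta q ^ 4 / 3)) p n = 0"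
proof -
  interpret st_regular R B \<epsilon> p using regular p .
  have Theta_eq: "Theta q = Th0 * R0 / (R (q$0) * st_alpha R B \<epsilon> q)" if "q \<in> U" for q
    unfolding Theta_def
    using st_regular.radiation_temperature_eq[OF regular[OF that] linear[OF that]]
      st_linear_b_derivs(1)[OF assms(1) regular linear that] by simp
  have b2_eq_0: "b2 = 0"
    using st_linear_b_derivs(2)[OF assms(1) regular linear p] .
  have "Rt * st_alpha R B \<epsilon> p \<noteq> 0"
    using Rt_pos alpha_pos by simp
  from has_gradient_divide[OF has_gradient_const has_gradient_st_beta[OF b2_eq_0] this]
  have "has_gradient (\<lambda>q. Th0 * R0 / (R (q$0) * st_alpha R B \<epsilon> q)) (\<lambda>k. - Theta p * st_omega R B \<epsilon> p k) p"
    by (rule has_gradient_cong)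
       (use Rt_pos alpha_pos in \<open>simp add: Theta_eq[OF p] st_omega_eq_form power2_eq_square\<close>)
  then have grad_Theta: "has_gradient Theta (\<lambda>k. - Theta p * st_omega R B \<epsilon> p k) p"
    by (rule has_gradient_transform_open[OF _ assms(1) p]) (simp add: Theta_eq)
  obtain GW where grad_W: "has_gradient (st_Omega R B \<epsilon>) GW p"
    by (rule has_gradient_st_Omega)
  have "div2 (diag_metric (st_alpha R B \<epsilon>) (st_Omega R B \<epsilon>)) (diag_metric_inv (st_alpha R B \<epsilon>) (st_Omega R B \<epsilon>))
      (perfect_fluid (st_alpha R B \<epsilon>) (st_Omega R B \<epsilon>) (\<lambda>q. a * Theta q ^ 4) (\<lambda>q. a * Theta q ^ 4 / 3)) p n = 0"
    by (rule div2_radiation_fluid_eq_0[OF has_gradient_st_alpha grad_W _ Omega_ne_0 grad_Theta])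
       (use alpha_pos in \<open>simp_all add: st_omega_def st_g_eq st_gi_eq st_u_eq\<close>)
  then show ?thesis
    unfolding st_g_eq st_gi_eq st_fluidT_eq .
qed

theorem mainTheorem12:
  fixes \<epsilon> :: real and R B :: "real \<Rightarrow> real" and U :: "pt set" and T S :: "real set"
  assumes "\<epsilon> \<in> {-1, 0, 1}" and "open U" and "open T" and "open S"
    and "\<forall>n. \<forall>t\<in>T. (deriv ^^ n) R differentiable (at t)"
    and "\<forall>n. \<forall>x\<in>S. (deriv ^^ n) B differentiable (at x)"
    and "\<forall>p\<in>U. p$0 \<in> T \<and> R (p$0) \<in> S \<and> R (p$0) > 0 \<and> deriv R (p$0) \<noteq> 0
            \<and> 1 + \<epsilon> / 4 * rsq p \<noteq> 0 \<and> 1 + B (R (p$0)) * st_w \<epsilon> p \<noteq> 0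
            \<and> st_alpha R B \<epsilon> p > 0"
  shows "(((\<forall>p\<in>U. \<forall>m n. st_shear R B \<epsilon> p m n = 0) \<and> closed_on U (st_omega R B \<epsilon>))
            \<longleftrightarrow> (\<forall>p\<in>U. (deriv ^^ 2) B (R (p$0)) = 0))
      \<and> ((\<forall>p\<in>U. (deriv ^^ 2) B (R (p$0)) = 0) \<longrightarrow>
           (\<forall>p\<in>U. \<forall>m. pd m (\<lambda>q. ln (R (q$0) * st_alpha R B \<epsilon> q)) p = st_omega R B \<epsilon> p m))
      \<and> (\<forall>b1 b2 aR \<Theta>0 R0. (\<forall>p\<in>U. B (R (p$0)) = b1 + b2 * R (p$0)) \<longrightarrow>
           (let \<Theta>r = (\<lambda>q. \<Theta>0 * R0 / R (q$0)
                          * (1 + b2 * st_w \<epsilon> q * R (q$0) / (1 + b1 * st_w \<epsilon> q)));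
                \<rho>r = (\<lambda>q. aR * \<Theta>r q ^ 4);
                pr = (\<lambda>q. \<rho>r q / 3)
            in \<forall>p\<in>U. \<forall>n. div2 (st_g R B \<epsilon>) (st_gi R B \<epsilon>) (st_fluidT R B \<epsilon> \<rho>r pr) p n = 0))"
proof -
  have regular: "st_regular R B \<epsilon> q" if "q \<in> U" for q
  proof -
    have "q$0 \<in> T" "R (q$0) \<in> S" using assms(7) that by auto
    then have "R differentiable (at (q$0))" "deriv R differentiable (at (q$0))"
      "B differentiable (at (R (q$0)))" "deriv B differentiable (at (R (q$0)))"
      using spec[OF assms(5), of 0] spec[OF assms(5), of 1] spec[OF assms(6), of 0] spec[OF assms(6), of 1]
      by simp_all
    then show ?thesis
      using assms(7) that
      by unfold_locales (simp_all add: DERIV_deriv_iff_real_differentiable st_D_def st_den_def)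
  qed
  have "(deriv ^^ 2) B = deriv (deriv B)"
    by (simp add: numeral_2_eq_2)
  moreover have "\<forall>p\<in>U. \<forall>m n. st_shear R B \<epsilon> p m n = 0"
    using regular st_regular.st_shear_eq_0 by blast
  moreover note closed_on_st_omega_iff[OF assms(2) regular]
  moreover have "\<forall>p\<in>U. \<forall>m. pd m (\<lambda>q. ln (R (q$0) * st_alpha R B \<epsilon> q)) p = st_omega R B \<epsilon> p m"
    if "\<forall>p\<in>U. deriv (deriv B) (R (p$0)) = 0"
    using that regular st_regular.pd_ln_st_beta by blast
  moreover have "div2 (st_g R B \<epsilon>) (st_gi R B \<epsilon>)
      (st_fluidT R B \<epsilon> (\<lambda>q. aR * Theta q ^ 4) (\<lambda>q. aR * Theta q ^ 4 / 3)) p n = 0"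
    if "\<forall>p\<in>U. B (R (p$0)) = b1 + b2 * R (p$0)" "p \<in> U"
      and "Theta = (\<lambda>q. \<Theta>0 * R0 / R (q$0) * (1 + b2 * st_w \<epsilon> q * R (q$0) / (1 + b1 * st_w \<epsilon> q)))"
    for b1 b2 aR \<Theta>0 R0 Theta p n
    using that by (intro div2_st_radiation_fluid_eq_0[OF assms(2) regular]) auto
  ultimately show ?thesis
    unfolding Let_def by simp
qed

end
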